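(* Consider the deep linear network setting below, trained by gradient descent with Polyak's momentum with step size $\eta$ and momentum parameter $\beta$. Let $\xi_t:=\mathrm{vec}(U_t-Y)\in\mathbb{R}^{d_yn}$, let $M_{t,l}:=\sum_{s=0}^t\beta^{t-s}\frac{\partial\ell}{\partial W^{(l)}}(W_s)$, and define $$H_t:=\frac{1}{m^{L-1}d_y}\sum_{l=1}^L\Big[(W^{(l-1:1)}_tX)^\top(W^{(l-1:1)}_tX)\otimes W^{(L:l+1)}_t(W^{(L:l+1)}_t)^\top\Big]\in\mathbb{R}^{d_yn\times d_yn},$$ $$\Phi_t:=\prod_{l}(W^{(l)}_t-\eta M_{t,l})-W^{(L:1)}_t+\eta\sum_{l=1}^LW^{(L:l+1)}_tM_{t,l}W^{(l-1:1)}_t,\qquad\phi_t:=\tfrac{1}{\sqrt{m^{L-1}d_y}}\mathrm{vec}(\Phi_tX),$$ $$\psi_t:=\tfrac{1}{\sqrt{m^{L-1}d_y}}\mathrm{vec}\Big((L-1)\beta W^{(L:1)}_tX+\beta W^{(L:1)}_{t-1}X-\beta\sum_{l=1}^LW^{(L:l+1)}_tW^{(l)}_{t-1}W^{(l-1:1)}_tX\Big),\qquad \iota_t:=\eta(H_0-H_t)\xi_t,$$ where $\prod_l(W^{(l)}_t-\eta M_{t,l})$ denotes the ordered product $(W^{(L)}_t-\eta M_{t,L})\cdots(W^{(1)}_t-\eta M_{t,1})$. Then $H_t$ is positive semidefinite and for every $t\ge0$, $$\begin{bmatrix}\xi_{t+1}\\ \xi_t\end{bmatrix}=\begin{bmatrix}(1+\beta)I_{d_yn}-\eta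 H_0&-\beta I_{d_yn}\\ I_{d_yn}&0\end{bmatrix}\begin{bmatrix}\xi_t\\ \xi_{t-1}\end{bmatrix}+\begin{bmatrix}\phi_t+\psi_t+\iota_t\\0\end{bmatrix}.$$
   Context: Deep linear network: $\mathcal N_W(x)=\frac{1}{\sqrt{m^{L-1}d_y}}W^{(L)}W^{(L-1)}\cdots W^{(1)}x$ with $W^{(l)}\in\mathbb{R}^{d_l\times d_{l-1}}$, $d_0=d$, $d_L=d_y$, $d_l=m$ otherwise. $W^{(j:i)}:=W^{(j)}W^{(j-1)}\cdots W^{(i)}$ for $i\le j$ and $W^{(i-1:i)}:=I$ (identity of appropriate size). Data matrix $X=[x_1,\dots,x_n]\in\mathbb{R}^{d\times n}$, labels $Y\in\mathbb{R}^{d_y\times n}$, output $U:=\frac{1}{\sqrt{m^{L-1}d_y}}W^{(L:1)}X$, loss $\ell(W)=\frac12\|U-Y\|_F^2$. Gradient descent with Polyak's momentum: $W^{(l)}_{-1}:=W^{(l)}_0$, $W^{(l)}_{t+1}=W^{(l)}_t-\eta\frac{\partial\ell}{\partial W^{(l)}}(W_t)+\beta(W^{(l)}_t-W^{(l)}_{t-1})$ for every layer $l$ (equivalently $W^{(l)}_{t+1}=W^{(l)}_t-\eta M_{t,l}$). $U_t$ is the output at iterate $W_t$. $\mathrm{vec}$ is column-major vectorization, $\otimes$ the Kronecker product. *)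

theory Defs
  imports Complex_Main "Jordan_Normal_Form.Matrix"
begin

definition ldim :: "nat \<Rightarrow> nat \<Rightarrow> nat \<Rightarrow> nat \<Rightarrow> nat \<Rightarrow> nat" where
  "ldim d m dy L l = (if l = 0 then d else if l = L then dy else m)"

text \<open>Ordered product W^(j:i) = A j * ... * A i, with W^(i-1:i) = identity of size d_(i-1).
  Called as lprod dm A i j.\<close>
fun lprod :: "(nat \<Rightarrow> nat) \<Rightarrow> (nat \<Rightarrow> real mat) \<Rightarrow> nat \<Rightarrow> nat \<Rightarrow> real mat" where
  "lprod dm A i 0 = 1\<^sub>m (dm 0)"
| "lprod dm A i (Suc j) = (if Suc j < i then 1\<^sub>m (dm (Suc j)) else A (Suc j) * lprod dm A i j)"

definition msum :: "nat \<Rightarrow> nat \<Rightarrow> (nat \<Rightarrow> real mat) \<Rightarrow> nat list \<Rightarrow> real mat" where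
  "msum r c f xs = foldr (\<lambda>i acc. f i + acc) xs (0\<^sub>m r c)"

definition vecc :: "real mat \<Rightarrow> real vec" where
  "vecc A = vec (dim_row A * dim_col A) (\<lambda>k. A $$ (k mod dim_row A, k div dim_row A))"

definition kron :: "real mat \<Rightarrow> real mat \<Rightarrow> real mat" where
  "kron A B = mat (dim_row A * dim_row B) (dim_col A * dim_col B)
     (\<lambda>(i, j). A $$ (i div dim_row B, j div dim_col B) * B $$ (i mod dim_row B, j mod dim_col B))"

definition psd :: "real mat \<Rightarrow> bool" where
  "psd A \<longleftrightarrow> dim_row A = dim_col A \<and> transpose_mat A = A \<and>
     (\<forall>v \<in> carrier_vec (dim_row A). v \<bullet> (A *\<^sub>v v) \<ge> 0)"

definition nrm :: "nat \<Rightarrow> nat \<Rightarrow> nat \<Rightarrow> real" where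
  "nrm m dy L = sqrt (real m ^ (L - 1) * real dy)"

definition outp :: "nat \<Rightarrow> nat \<Rightarrow> nat \<Rightarrow> nat \<Rightarrow> real mat \<Rightarrow> (nat \<Rightarrow> real mat) \<Rightarrow> real mat" where
  "outp d m dy L X Wl = (1 / nrm m dy L) \<cdot>\<^sub>m (lprod (ldim d m dy L) Wl 1 L * X)"

text \<open>Gradient of the loss 1/2 ||U - Y||_F^2 with respect to layer l:
  (1/sqrt(m^(L-1) dy)) (W^(L:l+1))^T (U - Y) (W^(l-1:1) X)^T.\<close>
definition grad :: "nat \<Rightarrow> nat \<Rightarrow> nat \<Rightarrow> nat \<Rightarrow> real mat \<Rightarrow> real mat \<Rightarrow> (nat \<Rightarrow> real mat) \<Rightarrow> nat \<Rightarrow> real mat" where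
  "grad d m dy L X Y Wl l =
     (1 / nrm m dy L) \<cdot>\<^sub>m (transpose_mat (lprod (ldim d m dy L) Wl (l + 1) L) * (outp d m dy L X Wl - Y)
        * transpose_mat (lprod (ldim d m dy L) Wl 1 (l - 1) * X))"

definition mom :: "nat \<Rightarrow> nat \<Rightarrow> nat \<Rightarrow> nat \<Rightarrow> real mat \<Rightarrow> real mat \<Rightarrow> real \<Rightarrow> (nat \<Rightarrow> nat \<Rightarrow> real mat) \<Rightarrow> nat \<Rightarrow> nat \<Rightarrow> real mat" where
  "mom d m dy L X Y \<beta> W t l =
     msum (ldim d m dy L l) (ldim d m dy L (l - 1)) (\<lambda>s. (\<beta> ^ (t - s)) \<cdot>\<^sub>m grad d m dy L X Y (W s) l) [0..<Suc t]"

definition Hmat :: "nat \<Rightarrow> nat \<Rightarrow> nat \<Rightarrow> nat \<Rightarrow> real mat \<Rightarrow> (nat \<Rightarrow> real mat) \<Rightarrow> real mat" where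
  "Hmat d m dy L X Wl =
     (1 / (real m ^ (L - 1) * real dy)) \<cdot>\<^sub>m
       msum (dy * dim_col X) (dy * dim_col X)
         (\<lambda>l. kron (transpose_mat (lprod (ldim d m dy L) Wl 1 (l - 1) * X) * (lprod (ldim d m dy L) Wl 1 (l - 1) * X))
                    (lprod (ldim d m dy L) Wl (l + 1) L * transpose_mat (lprod (ldim d m dy L) Wl (l + 1) L)))
         [1..<Suc L]"

text \<open>Gradient descent with Polyak's momentum, W_(-1) = W_0 (encoded by nat subtraction t - 1).\<close>
definition polyak_seq :: "nat \<Rightarrow> nat \<Rightarrow> nat \<Rightarrow> nat \<Rightarrow> real mat \<Rightarrow> real mat \<Rightarrow> real \<Rightarrow> real \<Rightarrow> (nat \<Rightarrow> nat \<Rightarrow> real mat) \<Rightarrow> bool" where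
  "polyak_seq d m dy L X Y \<eta> \<beta> W \<longleftrightarrow>
     (\<forall>t l. 1 \<le> l \<and> l \<le> L \<longrightarrow>
        W (Suc t) l = W t l - \<eta> \<cdot>\<^sub>m grad d m dy L X Y (W t) l + \<beta> \<cdot>\<^sub>m (W t l - W (t - 1) l))"

definition xi :: "nat \<Rightarrow> nat \<Rightarrow> nat \<Rightarrow> nat \<Rightarrow> real mat \<Rightarrow> real mat \<Rightarrow> (nat \<Rightarrow> nat \<Rightarrow> real mat) \<Rightarrow> nat \<Rightarrow> real vec" where
  "xi d m dy L X Y W t = vecc (outp d m dy L X (W t) - Y)"

definition Phi :: "nat \<Rightarrow> nat \<Rightarrow> nat \<Rightarrow> nat \<Rightarrow> real mat \<Rightarrow> real mat \<Rightarrow> real \<Rightarrow> real \<Rightarrow> (nat \<Rightarrow> nat \<Rightarrow> real mat) \<Rightarrow> nat \<Rightarrow> real mat" where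
  "Phi d m dy L X Y \<eta> \<beta> W t =
     lprod (ldim d m dy L) (\<lambda>l. W t l - \<eta> \<cdot>\<^sub>m mom d m dy L X Y \<beta> W t l) 1 L
     - lprod (ldim d m dy L) (W t) 1 L
     + \<eta> \<cdot>\<^sub>m msum dy d (\<lambda>l. lprod (ldim d m dy L) (W t) (l + 1) L * mom d m dy L X Y \<beta> W t l
                              * lprod (ldim d m dy L) (W t) 1 (l - 1)) [1..<Suc L]"

definition phi :: "nat \<Rightarrow> nat \<Rightarrow> nat \<Rightarrow> nat \<Rightarrow> real mat \<Rightarrow> real mat \<Rightarrow> real \<Rightarrow> real \<Rightarrow> (nat \<Rightarrow> nat \<Rightarrow> real mat) \<Rightarrow> nat \<Rightarrow> real vec" where
  "phi d m dy L X Y \<eta> \<beta> W t = vecc ((1 / nrm m dy L) \<cdot>\<^sub>m (Phi d m dy L X Y \<eta> \<beta> W t * X))"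

definition psi :: "nat \<Rightarrow> nat \<Rightarrow> nat \<Rightarrow> nat \<Rightarrow> real mat \<Rightarrow> real \<Rightarrow> (nat \<Rightarrow> nat \<Rightarrow> real mat) \<Rightarrow> nat \<Rightarrow> real vec" where
  "psi d m dy L X \<beta> W t = vecc ((1 / nrm m dy L) \<cdot>\<^sub>m
     ((real (L - 1) * \<beta>) \<cdot>\<^sub>m (lprod (ldim d m dy L) (W t) 1 L * X)
      + \<beta> \<cdot>\<^sub>m (lprod (ldim d m dy L) (W (t - 1)) 1 L * X)
      - \<beta> \<cdot>\<^sub>m msum dy (dim_col X)
           (\<lambda>l. lprod (ldim d m dy L) (W t) (l + 1) L * W (t - 1) l * lprod (ldim d m dy L) (W t) 1 (l - 1) * X)
           [1..<Suc L]))"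

definition iota :: "nat \<Rightarrow> nat \<Rightarrow> nat \<Rightarrow> nat \<Rightarrow> real mat \<Rightarrow> real mat \<Rightarrow> real \<Rightarrow> (nat \<Rightarrow> nat \<Rightarrow> real mat) \<Rightarrow> nat \<Rightarrow> real vec" where
  "iota d m dy L X Y \<eta> W t =
     \<eta> \<cdot>\<^sub>v ((Hmat d m dy L X (W 0) - Hmat d m dy L X (W t)) *\<^sub>v xi d m dy L X Y W t)"

end

theory Submission
  imports Defs
begin

text \<open>
  Unrolling the momentum recursion gives W_(t+1) = W_t - \<eta> M_t layerwise, and
  \<eta> M_t = \<eta> \<nabla>_t - \<beta> (W_t - W_(t-1)). So the next output is the ordered product of the
  W_t - \<eta> M_t, and \<Phi>_t is everything beyond its terms of order 0 and 1 in \<eta>. In the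
  first-order term the gradient parts add up to -\<eta> H_t \<xi>_t by the vec trick
  (P \<otimes> Q) vec E = vec (Q E P^T), while the momentum parts give \<psi>_t plus the
  \<beta>-multiples of \<xi>_t and \<xi>_(t-1); trading H_t for H_0 costs \<iota>_t.
  Each summand of H_t is a Kronecker product of two Gram matrices, hence H_t is
  positive semidefinite.
\<close>

lemma divmod_less_bounds:
  assumes "j < r * c"
  shows "j mod r < r" and "j div r < (c::nat)"
proof -
  have "0 < r" using assms by (cases r) auto
  then show "j mod r < r" "j div r < c" using assms by (auto simp: less_mult_imp_div_less mult.commute)
qed

lemma add_mult_less_mult:
  assumes "p < r" and "q < c"
  shows "p + r * q < r * (c::nat)"
proof -
  have "p + r * q < r * Suc q" using assms(1) by simp
  also have "\<dots> \<le> r * c" using assms(2) by (intro mult_le_mono2) simp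
  finally show ?thesis .
qed

lemma sum_divmod_reindex:
  "(\<Sum>j<r * c. f (j mod r) (j div r)) = (\<Sum>q<c. \<Sum>p<r. f p (q::nat))"
proof -
  have "(\<Sum>j<r * c. f (j mod r) (j div r)) = (\<Sum>(p, q)\<in>{..<r} \<times> {..<c}. f p q)"
  proof (rule sum.reindex_bij_witness[where i = "\<lambda>(p, q). p + r * q" and j = "\<lambda>j. (j mod r, j div r)"])
    fix a assume "a \<in> {..<r} \<times> {..<c}"
    then show "(\<lambda>j. (j mod r, j div r)) ((\<lambda>(p, q). p + r * q) a) = a"
      and "(\<lambda>(p, q). p + r * q) a \<in> {..<r * c}" by (auto simp: add_mult_less_mult)
  next
    fix b assume "b \<in> {..<r * c}"
    then show "(\<lambda>j. (j mod r, j div r)) b \<in> {..<r} \<times> {..<c}" by (auto simp: divmod_less_bounds)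
  qed simp_all
  then show ?thesis by (simp add: sum.cartesian_product[symmetric] sum.swap[of _ "{..<r}"])
qed

text \<open>With truncated subtraction the step at t = 0 reads w 1 = w 0 - \<eta> g 0, which encodes
  the convention W_(-1) = W_0.\<close>

lemma heavy_ball_momentum_form:
  fixes w g :: "nat \<Rightarrow> real"
  assumes step: "\<And>t. w (Suc t) = w t - \<eta> * g t + \<beta> * (w t - w (t - 1))"
  shows "w (Suc t) = w t - \<eta> * (\<Sum>s<Suc t. \<beta> ^ (t - s) * g s)"
proof (induction t)
  case 0
  show ?case using step[of 0] by simp
next
  case (Suc t)
  have "\<beta> * (\<Sum>s<Suc t. \<beta> ^ (t - s) * g s) = (\<Sum>s<Suc t. \<beta> ^ (Suc t - s) * g s)"
    unfolding sum_distrib_left by (rule sum.cong) (auto simp: Suc_diff_le)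
  then have "(\<Sum>s<Suc (Suc t). \<beta> ^ (Suc t - s) * g s) = g (Suc t) + \<beta> * (\<Sum>s<Suc t. \<beta> ^ (t - s) * g s)"
    unfolding sum.lessThan_Suc[of _ "Suc t"] by simp
  then show ?case using step[of "Suc t"] Suc.IH by (simp del: sum.lessThan_Suc add: algebra_simps)
qed

lemma zero_mult_vec: "v \<in> carrier_vec c \<Longrightarrow> 0\<^sub>m r c *\<^sub>v v = 0\<^sub>v r"
  by (intro eq_vecI) auto

lemma smult_mat_mult_vec:
  "A \<in> carrier_mat r c \<Longrightarrow> v \<in> carrier_vec c \<Longrightarrow> (a \<cdot>\<^sub>m A) *\<^sub>v v = a \<cdot>\<^sub>v (A *\<^sub>v (v :: 'a :: comm_ring vec))"
  by (intro eq_vecI) (auto simp: scalar_prod_def sum_distrib_left mult.assoc)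

lemma smult_smult_mat: "a \<cdot>\<^sub>m (b \<cdot>\<^sub>m A) = (a * b) \<cdot>\<^sub>m (A :: 'a :: semigroup_mult mat)"
  by (intro eq_matI) (auto simp: mult.assoc)

lemma transpose_smult_mat: "transpose_mat (a \<cdot>\<^sub>m A) = a \<cdot>\<^sub>m transpose_mat A"
  by (intro eq_matI) auto

lemma transpose_gram:
  fixes A :: "'a :: comm_semiring_0 mat"
  shows "transpose_mat (transpose_mat A * A) = transpose_mat A * A"
    and "transpose_mat (A * transpose_mat A) = A * transpose_mat A"
proof -
  have A: "A \<in> carrier_mat (dim_row A) (dim_col A)" by simp
  have At: "transpose_mat A \<in> carrier_mat (dim_col A) (dim_row A)" by simp
  show "transpose_mat (transpose_mat A * A) = transpose_mat A * A"
    using transpose_mult[OF At A] by simp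
  show "transpose_mat (A * transpose_mat A) = A * transpose_mat A"
    using transpose_mult[OF A At] by simp
qed

lemma sandwich_smult_mat:
  fixes N :: "'a :: comm_ring mat"
  assumes "A \<in> carrier_mat r k" "N \<in> carrier_mat k k'" "B \<in> carrier_mat k' c"
  shows "A * (a \<cdot>\<^sub>m N) * B = a \<cdot>\<^sub>m (A * N * B)"
  using assms by (simp add: mult_smult_distrib[of _ r k] mult_smult_assoc_mat[of _ r k'])

lemma sandwich_lincomb_mat:
  fixes N1 N2 N3 :: "'a :: comm_ring mat"
  assumes A: "A \<in> carrier_mat r k" and N: "N1 \<in> carrier_mat k k'" "N2 \<in> carrier_mat k k'" "N3 \<in> carrier_mat k k'"
    and B: "B \<in> carrier_mat k' c"
  shows "A * (a \<cdot>\<^sub>m N1 - b \<cdot>\<^sub>m N2 + e \<cdot>\<^sub>m N3) * B = a \<cdot>\<^sub>m (A * N1 * B) - b \<cdot>\<^sub>m (A * N2 * B) + e \<cdot>\<^sub>m (A * N3 * B)"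
proof -
  have AN: "A * N1 \<in> carrier_mat r k'" "A * N2 \<in> carrier_mat r k'" "A * N3 \<in> carrier_mat r k'"
    using A N by auto
  have "A * (a \<cdot>\<^sub>m N1 - b \<cdot>\<^sub>m N2 + e \<cdot>\<^sub>m N3) = A * (a \<cdot>\<^sub>m N1 - b \<cdot>\<^sub>m N2) + A * (e \<cdot>\<^sub>m N3)"
    by (rule mult_add_distrib_mat[OF A]) (use N in \<open>auto intro: minus_carrier_mat\<close>)
  also have "A * (a \<cdot>\<^sub>m N1 - b \<cdot>\<^sub>m N2) = A * (a \<cdot>\<^sub>m N1) - A * (b \<cdot>\<^sub>m N2)"
    by (rule mult_minus_distrib_mat[OF A]) (use N in auto)
  finally have "A * (a \<cdot>\<^sub>m N1 - b \<cdot>\<^sub>m N2 + e \<cdot>\<^sub>m N3) * B = (a \<cdot>\<^sub>m (A * N1) - b \<cdot>\<^sub>m (A * N2) + e \<cdot>\<^sub>m (A * N3)) * B"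
    using A N by (simp add: mult_smult_distrib)
  also have "\<dots> = (a \<cdot>\<^sub>m (A * N1) - b \<cdot>\<^sub>m (A * N2)) * B + (e \<cdot>\<^sub>m (A * N3)) * B"
    by (rule add_mult_distrib_mat[of _ r k' _ B]) (use AN B in \<open>auto intro: minus_carrier_mat\<close>)
  also have "(a \<cdot>\<^sub>m (A * N1) - b \<cdot>\<^sub>m (A * N2)) * B = (a \<cdot>\<^sub>m (A * N1)) * B - (b \<cdot>\<^sub>m (A * N2)) * B"
    by (rule minus_mult_distrib_mat[of _ r k' _ B]) (use AN B in auto)
  finally show ?thesis using AN B by (simp add: mult_smult_assoc_mat)
qed

lemma smult_one_mat_mult_vec:
  fixes H :: "'a :: comm_ring_1 mat"
  assumes "H \<in> carrier_mat N N" and "v \<in> carrier_vec N"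
  shows "(a \<cdot>\<^sub>m 1\<^sub>m N - b \<cdot>\<^sub>m H) *\<^sub>v v = a \<cdot>\<^sub>v v - b \<cdot>\<^sub>v (H *\<^sub>v v)"
    and "(- (b \<cdot>\<^sub>m 1\<^sub>m N)) *\<^sub>v v = (- b) \<cdot>\<^sub>v v"
proof -
  show "(a \<cdot>\<^sub>m 1\<^sub>m N - b \<cdot>\<^sub>m H) *\<^sub>v v = a \<cdot>\<^sub>v v - b \<cdot>\<^sub>v (H *\<^sub>v v)"
    using assms by (simp add: minus_mult_distrib_mat_vec[of _ N N] smult_mat_mult_vec[of _ N N])
  have "- (b \<cdot>\<^sub>m 1\<^sub>m N) = (- b) \<cdot>\<^sub>m 1\<^sub>m N" by (intro eq_matI) auto
  then show "(- (b \<cdot>\<^sub>m 1\<^sub>m N)) *\<^sub>v v = (- b) \<cdot>\<^sub>v v"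
    using assms(2) by (simp add: smult_mat_mult_vec[of _ N N])
qed

lemma four_block_companion_mult_vec:
  fixes A B :: "'a :: semiring_1 mat"
  assumes "A \<in> carrier_mat N N" "B \<in> carrier_mat N N"
    and "u \<in> carrier_vec N" "w \<in> carrier_vec N" "z \<in> carrier_vec N"
  shows "four_block_mat A B (1\<^sub>m N) (0\<^sub>m N N) *\<^sub>v (u @\<^sub>v w) + (z @\<^sub>v 0\<^sub>v N) = (A *\<^sub>v u + B *\<^sub>v w + z) @\<^sub>v u"
proof -
  have "four_block_mat A B (1\<^sub>m N) (0\<^sub>m N N) *\<^sub>v (u @\<^sub>v w) = (A *\<^sub>v u + B *\<^sub>v w) @\<^sub>v (1\<^sub>m N *\<^sub>v u + 0\<^sub>m N N *\<^sub>v w)"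
    by (rule four_block_mat_mult_vec) (use assms in auto)
  also have "1\<^sub>m N *\<^sub>v u + 0\<^sub>m N N *\<^sub>v w = u"
    using assms(3,4) by (simp add: zero_mult_vec one_mult_mat_vec[OF assms(3)])
  moreover have "A *\<^sub>v u + B *\<^sub>v w \<in> carrier_vec N" using assms by simp
  ultimately show ?thesis using assms by (simp add: append_vec_add[of _ N _ _ N])
qed

lemma msum_carrier:
  "(\<And>i. i \<in> set xs \<Longrightarrow> f i \<in> carrier_mat r c) \<Longrightarrow> msum r c f xs \<in> carrier_mat r c"
  by (induction xs) (auto simp: msum_def)

lemma msum_cong:
  "(\<And>i. i \<in> set xs \<Longrightarrow> f i = g i) \<Longrightarrow> msum r c f xs = msum r c g xs"
  by (induction xs) (auto simp: msum_def)

lemma index_msum: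
  "(\<And>i. i \<in> set xs \<Longrightarrow> f i \<in> carrier_mat r c) \<Longrightarrow> p < r \<Longrightarrow> q < c \<Longrightarrow>
   msum r c f xs $$ (p, q) = (\<Sum>i\<leftarrow>xs. f i $$ (p, q))"
proof (induction xs)
  case (Cons a xs)
  have "msum r c f xs \<in> carrier_mat r c" using Cons.prems by (intro msum_carrier) auto
  then show ?case using Cons by (simp add: msum_def)
qed (simp add: msum_def)

lemma index_msum_upt:
  "(\<And>i. a \<le> i \<Longrightarrow> i < b \<Longrightarrow> f i \<in> carrier_mat r c) \<Longrightarrow> p < r \<Longrightarrow> q < c \<Longrightarrow>
   msum r c f [a..<b] $$ (p, q) = (\<Sum>i = a..<b. f i $$ (p, q))"
  by (subst index_msum) (auto simp flip: sum_set_upt_conv_sum_list_nat)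

lemma msum_mult:
  "(\<And>i. i \<in> set xs \<Longrightarrow> f i \<in> carrier_mat r c) \<Longrightarrow> B \<in> carrier_mat c c' \<Longrightarrow>
   msum r c f xs * B = msum r c' (\<lambda>i. f i * B) xs"
proof (induction xs)
  case (Cons a xs)
  have "msum r c f xs \<in> carrier_mat r c" using Cons.prems by (intro msum_carrier) auto
  then show ?case using Cons by (simp add: msum_def add_mult_distrib_mat[of _ r c])
qed (simp add: msum_def)

lemma smult_msum:
  "(\<And>i. i \<in> set xs \<Longrightarrow> f i \<in> carrier_mat r c) \<Longrightarrow>
   a \<cdot>\<^sub>m msum r c f xs = msum r c (\<lambda>i. a \<cdot>\<^sub>m f i) xs"
proof (induction xs)
  case (Cons x xs)
  have "msum r c f xs \<in> carrier_mat r c" using Cons.prems by (intro msum_carrier) auto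
  then show ?case using Cons by (simp add: msum_def add_smult_distrib_left_mat[of _ r c])
qed (simp add: msum_def)

lemma transpose_msum:
  "(\<And>i. i \<in> set xs \<Longrightarrow> f i \<in> carrier_mat r c) \<Longrightarrow>
   transpose_mat (msum r c f xs) = msum c r (\<lambda>i. transpose_mat (f i)) xs"
proof (induction xs)
  case (Cons a xs)
  have "msum r c f xs \<in> carrier_mat r c" using Cons.prems by (intro msum_carrier) auto
  then show ?case using Cons by (simp add: msum_def transpose_add[of _ r c])
qed (simp add: msum_def)

lemma msum_quadratic_form_nonneg:
  fixes f :: "nat \<Rightarrow> real mat"
  assumes "\<And>i. i \<in> set xs \<Longrightarrow> f i \<in> carrier_mat N N"
    and "\<And>i. i \<in> set xs \<Longrightarrow> v \<bullet> (f i *\<^sub>v v) \<ge> 0"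
    and v: "v \<in> carrier_vec N"
  shows "v \<bullet> (msum N N f xs *\<^sub>v v) \<ge> 0"
  using assms(1,2)
proof (induction xs)
  case (Cons a xs)
  have "msum N N f xs \<in> carrier_mat N N" using Cons.prems by (intro msum_carrier) auto
  moreover have "f a \<in> carrier_mat N N" using Cons.prems by simp
  ultimately have "v \<bullet> (msum N N f (a # xs) *\<^sub>v v) = v \<bullet> (f a *\<^sub>v v) + v \<bullet> (msum N N f xs *\<^sub>v v)"
    using v by (simp add: msum_def add_mult_distrib_mat_vec scalar_prod_add_distrib[OF v])
  then show ?case using Cons by simp
qed (use v in \<open>simp add: msum_def zero_mult_vec\<close>)

subsection \<open>Vectorization and Kronecker products\<close>

lemma dim_vecc [simp]: "dim_vec (vecc M) = dim_row M * dim_col M"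
  by (simp add: vecc_def)

lemma vecc_carrier: "M \<in> carrier_mat r c \<Longrightarrow> vecc M \<in> carrier_vec (r * c)"
  unfolding carrier_vec_def carrier_mat_def by simp

lemma index_vecc: "M \<in> carrier_mat r c \<Longrightarrow> i < r * c \<Longrightarrow> vecc M $ i = M $$ (i mod r, i div r)"
  by (simp add: vecc_def)

lemma vecc_add:
  assumes "M \<in> carrier_mat r c" "N \<in> carrier_mat r c"
  shows "vecc (M + N) = vecc M + vecc N"
proof (rule eq_vecI)
  fix i assume "i < dim_vec (vecc M + vecc N)"
  then have i: "i < r * c" using assms by simp
  then show "vecc (M + N) $ i = (vecc M + vecc N) $ i"
    using assms divmod_less_bounds[OF i]
    by (simp add: index_vecc[OF add_carrier_mat[OF assms(2)] i] index_vecc[OF assms(1) i] index_vecc[OF assms(2) i])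
qed (use assms in simp)

lemma vecc_smult: "vecc (a \<cdot>\<^sub>m M) = a \<cdot>\<^sub>v vecc M"
proof (rule eq_vecI)
  fix i assume "i < dim_vec (a \<cdot>\<^sub>v vecc M)"
  then have "i < dim_row M * dim_col M" by simp
  then show "vecc (a \<cdot>\<^sub>m M) $ i = (a \<cdot>\<^sub>v vecc M) $ i"
    using divmod_less_bounds[of i "dim_row M" "dim_col M"] by (simp add: vecc_def)
qed simp

lemma vecc_zero: "vecc (0\<^sub>m r c) = 0\<^sub>v (r * c)"
proof (rule eq_vecI)
  fix i assume "i < dim_vec (0\<^sub>v (r * c))"
  then show "vecc (0\<^sub>m r c) $ i = 0\<^sub>v (r * c) $ i"
    using divmod_less_bounds[of i r c] by (simp add: vecc_def)
qed simp

lemma kron_carrier: "P \<in> carrier_mat a b \<Longrightarrow> Q \<in> carrier_mat c e \<Longrightarrow> kron P Q \<in> carrier_mat (a * c) (b * e)"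
  unfolding kron_def carrier_mat_def by simp

lemma transpose_kron: "transpose_mat (kron P Q) = kron (transpose_mat P) (transpose_mat Q)"
proof (rule eq_matI)
  fix i j assume "i < dim_row (kron (transpose_mat P) (transpose_mat Q))"
    and "j < dim_col (kron (transpose_mat P) (transpose_mat Q))"
  then have i: "i < dim_col Q * dim_col P" and j: "j < dim_row Q * dim_row P" by (simp_all add: kron_def mult.commute)
  with divmod_less_bounds[OF i] divmod_less_bounds[OF j] show "transpose_mat (kron P Q) $$ (i, j) = kron (transpose_mat P) (transpose_mat Q) $$ (i, j)"
    by (simp add: kron_def mult.commute)
qed (simp_all add: kron_def)

lemma kron_mult_vecc:
  assumes P: "P \<in> carrier_mat n n'" and Q: "Q \<in> carrier_mat r r'" and E: "E \<in> carrier_mat r' n'"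
  shows "kron P Q *\<^sub>v vecc E = vecc (Q * E * transpose_mat P)"
proof (rule eq_vecI)
  fix i assume "i < dim_vec (vecc (Q * E * transpose_mat P))"
  then have i: "i < r * n" using P Q by simp
  note b = divmod_less_bounds[OF i]
  have "(kron P Q *\<^sub>v vecc E) $ i =
      (\<Sum>j<r' * n'. P $$ (i div r, j div r') * Q $$ (i mod r, j mod r') * E $$ (j mod r', j div r'))"
    using P Q E i b divmod_less_bounds[of _ r' n']
    by (auto simp: kron_def scalar_prod_def vecc_def atLeast0LessThan mult.commute intro!: sum.cong)
  also have "\<dots> = (\<Sum>q<n'. \<Sum>p<r'. P $$ (i div r, q) * Q $$ (i mod r, p) * E $$ (p, q))"
    by (rule sum_divmod_reindex[where f = "\<lambda>p q. P $$ (i div r, q) * Q $$ (i mod r, p) * E $$ (p, q)"])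
  also have "\<dots> = (Q * E * transpose_mat P) $$ (i mod r, i div r)"
    using P Q E b
    by (simp add: scalar_prod_def sum_distrib_left atLeast0LessThan mult_ac sum.swap[of _ "{..<n'}"])
  also have "\<dots> = vecc (Q * E * transpose_mat P) $ i"
    using index_vecc[of _ r n, OF _ i] P Q E by simp
  finally show "(kron P Q *\<^sub>v vecc E) $ i = vecc (Q * E * transpose_mat P) $ i" .
qed (use P Q E in \<open>simp add: kron_def mult.commute\<close>)

lemma msum_kron_mult_vecc:
  assumes "\<And>i. i \<in> set xs \<Longrightarrow> P i \<in> carrier_mat n n" and "\<And>i. i \<in> set xs \<Longrightarrow> Q i \<in> carrier_mat r r"
    and E: "E \<in> carrier_mat r n"
  shows "msum (r * n) (r * n) (\<lambda>i. kron (P i) (Q i)) xs *\<^sub>v vecc E =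
         vecc (msum r n (\<lambda>i. Q i * E * transpose_mat (P i)) xs)"
  using assms(1,2)
proof (induction xs)
  case Nil
  show ?case using zero_mult_vec[OF vecc_carrier[OF E]] by (simp add: msum_def vecc_zero)
next
  case (Cons a xs)
  have Pa: "P a \<in> carrier_mat n n" and Qa: "Q a \<in> carrier_mat r r" using Cons.prems by auto
  have Ka: "kron (P a) (Q a) \<in> carrier_mat (r * n) (r * n)"
    using kron_carrier[OF Pa Qa] by (simp add: mult.commute)
  have S: "msum (r * n) (r * n) (\<lambda>i. kron (P i) (Q i)) xs \<in> carrier_mat (r * n) (r * n)"
    using Cons.prems kron_carrier by (intro msum_carrier) (fastforce simp: mult.commute)
  have T: "msum r n (\<lambda>i. Q i * E * transpose_mat (P i)) xs \<in> carrier_mat r n"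
    using Cons.prems E by (intro msum_carrier) (meson list.set_intros(2) mult_carrier_mat transpose_carrier_mat)
  have "msum (r * n) (r * n) (\<lambda>i. kron (P i) (Q i)) (a # xs) *\<^sub>v vecc E
      = kron (P a) (Q a) *\<^sub>v vecc E + msum (r * n) (r * n) (\<lambda>i. kron (P i) (Q i)) xs *\<^sub>v vecc E"
    using add_mult_distrib_mat_vec[OF Ka S vecc_carrier[OF E]] by (simp add: msum_def)
  also have "\<dots> = vecc (Q a * E * transpose_mat (P a)) + vecc (msum r n (\<lambda>i. Q i * E * transpose_mat (P i)) xs)"
    using Cons kron_mult_vecc[OF Pa Qa E] by simp
  also have "\<dots> = vecc (msum r n (\<lambda>i. Q i * E * transpose_mat (P i)) (a # xs))"
    using vecc_add[OF _ T, of "Q a * E * transpose_mat (P a)"] Pa Qa E by (simp add: msum_def)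
  finally show ?case .
qed

text \<open>The quadratic form is the sum of squares of the entries of A^T V B^T, where V is v
  reshaped into an r \<times> n matrix.\<close>

lemma kron_gram_quadratic_form_nonneg:
  fixes A B :: "real mat"
  assumes B: "B \<in> carrier_mat k n" and A: "A \<in> carrier_mat r k'" and v: "v \<in> carrier_vec (n * r)"
  shows "v \<bullet> (kron (transpose_mat B * B) (A * transpose_mat A) *\<^sub>v v) \<ge> 0"
proof -
  define K where "K = kron (transpose_mat B * B) (A * transpose_mat A)"
  define F where "F a b i = v $ i * B $$ (a, i div r) * A $$ (i mod r, b)" for a b i
  have K: "K \<in> carrier_mat (n * r) (n * r)" unfolding K_def using A B by (auto intro: kron_carrier)
  have K_entry: "K $$ (i, j) = (\<Sum>a<k. B $$ (a, i div r) * B $$ (a, j div r)) *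
                               (\<Sum>b<k'. A $$ (i mod r, b) * A $$ (j mod r, b))"
    if "i < n * r" and "j < n * r" for i j
    using A B that divmod_less_bounds[of i r n] divmod_less_bounds[of j r n]
    by (simp add: K_def kron_def scalar_prod_def atLeast0LessThan mult.commute)
  have "v \<bullet> (K *\<^sub>v v) = (\<Sum>i<n * r. v $ i * (\<Sum>j<n * r. K $$ (i, j) * v $ j))"
    using K v by (simp add: scalar_prod_def atLeast0LessThan)
  also have "\<dots> = (\<Sum>i<n * r. \<Sum>j<n * r. \<Sum>a<k. \<Sum>b<k'. F a b i * F a b j)"
    by (intro sum.cong refl)
       (simp add: K_entry F_def sum_distrib_left sum_distrib_right mult_ac)
  also have "\<dots> = (\<Sum>i<n * r. \<Sum>a<k. \<Sum>j<n * r. \<Sum>b<k'. F a b i * F a b j)"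
    by (rule sum.cong[OF refl], rule sum.swap)
  also have "\<dots> = (\<Sum>a<k. \<Sum>i<n * r. \<Sum>j<n * r. \<Sum>b<k'. F a b i * F a b j)"
    by (rule sum.swap)
  also have "\<dots> = (\<Sum>a<k. \<Sum>i<n * r. \<Sum>b<k'. \<Sum>j<n * r. F a b i * F a b j)"
    by (rule sum.cong[OF refl], rule sum.cong[OF refl], rule sum.swap)
  also have "\<dots> = (\<Sum>a<k. \<Sum>b<k'. \<Sum>i<n * r. \<Sum>j<n * r. F a b i * F a b j)"
    by (rule sum.cong[OF refl], rule sum.swap)
  also have "\<dots> = (\<Sum>a<k. \<Sum>b<k'. (\<Sum>i<n * r. F a b i)\<^sup>2)"
    by (simp add: power2_eq_square sum_product)
  also have "\<dots> \<ge> 0" by (intro sum_nonneg) simp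
  finally show ?thesis unfolding K_def .
qed

subsection \<open>Ordered products of layers\<close>

lemma lprod_carrier:
  assumes "\<And>k. i \<le> k \<Longrightarrow> k \<le> j \<Longrightarrow> A k \<in> carrier_mat (dm k) (dm (k - 1))"
    and "i \<le> Suc j"
  shows "lprod dm A i j \<in> carrier_mat (dm j) (dm (i - 1))"
  using assms
proof (induction j)
  case 0
  then show ?case by (cases i) auto
next
  case (Suc j)
  show ?case
  proof (cases "Suc j < i")
    case False
    then have "lprod dm A i j \<in> carrier_mat (dm j) (dm (i - 1))" using Suc by simp
    moreover have "A (Suc j) \<in> carrier_mat (dm (Suc j)) (dm j)" using Suc.prems(1)[of "Suc j"] False by simp
    ultimately show ?thesis using False by simp
  qed (use Suc.prems in \<open>auto simp: le_Suc_eq\<close>)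
qed

lemma lprod_cong:
  assumes "\<And>k. i \<le> k \<Longrightarrow> k \<le> j \<Longrightarrow> A k = B k"
  shows "lprod dm A i j = lprod dm B i j"
  using assms by (induction j) auto

lemma lprod_split:
  assumes "\<And>k. i \<le> k \<Longrightarrow> k \<le> j \<Longrightarrow> A k \<in> carrier_mat (dm k) (dm (k - 1))"
    and "i \<le> Suc l" and "l \<le> j"
  shows "lprod dm A (Suc l) j * lprod dm A i l = lprod dm A i j"
  using assms
proof (induction j)
  case 0
  then show ?case using lprod_carrier[of i 0 A dm] by simp
next
  case (Suc j)
  show ?case
  proof (cases "l = Suc j")
    case True
    then show ?thesis using lprod_carrier[of i l A dm] Suc.prems by simp
  next
    case False
    then have "l \<le> j" using Suc.prems by simp
    moreover have "lprod dm A (Suc l) j \<in> carrier_mat (dm j) (dm l)"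
      using lprod_carrier[of "Suc l" j A dm] Suc.prems \<open>l \<le> j\<close> by simp
    moreover have "lprod dm A i l \<in> carrier_mat (dm l) (dm (i - 1))"
      using lprod_carrier[of i l A dm] Suc.prems \<open>l \<le> j\<close> by simp
    moreover have "A (Suc j) \<in> carrier_mat (dm (Suc j)) (dm j)" using Suc.prems(1)[of "Suc j"] Suc.prems \<open>l \<le> j\<close> by simp
    ultimately show ?thesis using Suc by (simp add: assoc_mult_mat)
  qed
qed

lemma lprod_split_at:
  assumes "\<And>k. i \<le> k \<Longrightarrow> k \<le> j \<Longrightarrow> A k \<in> carrier_mat (dm k) (dm (k - 1))"
    and "i \<le> l" and "l \<le> j" and "1 \<le> l"
  shows "lprod dm A (l + 1) j * A l * lprod dm A i (l - 1) = lprod dm A i j"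
proof -
  obtain l' where l': "l = Suc l'" using assms(4) by (cases l) auto
  have "lprod dm A (Suc l) j \<in> carrier_mat (dm j) (dm l)"
    using lprod_carrier[of "Suc l" j A dm] assms by simp
  moreover have "lprod dm A i l' \<in> carrier_mat (dm l') (dm (i - 1))"
    using lprod_carrier[of i l' A dm] assms l' by simp
  moreover have "A l \<in> carrier_mat (dm l) (dm l')" using assms(1)[of l] assms l' by simp
  ultimately have "lprod dm A (l + 1) j * A l * lprod dm A i (l - 1) = lprod dm A (Suc l) j * lprod dm A i l"
    using l' assms by (simp add: assoc_mult_mat)
  also have "\<dots> = lprod dm A i j" using lprod_split[of i j A dm l, OF assms(1)] assms(2,3) by simp
  finally show ?thesis .
qed

subsection \<open>The network trained by Polyak's momentum\<close>

locale polyak_network =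
  fixes d m dy L n :: nat and X Y :: "real mat" and \<eta> \<beta> :: real
    and W :: "nat \<Rightarrow> nat \<Rightarrow> real mat"
  assumes depth_pos: "L \<ge> 1"
    and X_carrier: "X \<in> carrier_mat d n" and Y_carrier: "Y \<in> carrier_mat dy n"
    and initial_carrier: "\<forall>l. 1 \<le> l \<and> l \<le> L \<longrightarrow> W 0 l \<in> carrier_mat (ldim d m dy L l) (ldim d m dy L (l - 1))"
    and polyak: "polyak_seq d m dy L X Y \<eta> \<beta> W"
begin

abbreviation dm :: "nat \<Rightarrow> nat" where "dm \<equiv> ldim d m dy L"
abbreviation G :: "nat \<Rightarrow> nat \<Rightarrow> real mat" where "G t l \<equiv> grad d m dy L X Y (W t) l"
abbreviation M :: "nat \<Rightarrow> nat \<Rightarrow> real mat" where "M t l \<equiv> mom d m dy L X Y \<beta> W t l"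

text \<open>above t l and below t l are the paper's W_t^(L:l+1) and W_t^(l-1:1); net t is the
  output U_t before the normalisation by nrm m dy L.\<close>

abbreviation above :: "nat \<Rightarrow> nat \<Rightarrow> real mat" where "above t l \<equiv> lprod dm (W t) (l + 1) L"
abbreviation below :: "nat \<Rightarrow> nat \<Rightarrow> real mat" where "below t l \<equiv> lprod dm (W t) 1 (l - 1)"
abbreviation net :: "nat \<Rightarrow> real mat" where "net t \<equiv> lprod dm (W t) 1 L * X"
abbreviation residual :: "nat \<Rightarrow> real mat" where "residual t \<equiv> outp d m dy L X (W t) - Y"

lemma nrm_sq: "nrm m dy L * nrm m dy L = real m ^ (L - 1) * real dy"
  unfolding nrm_def by simp

lemma ldim_0 [simp]: "dm 0 = d"
  by (simp add: ldim_def)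

lemma ldim_depth [simp]: "dm L = dy"
  using depth_pos by (simp add: ldim_def)

context
  fixes Wl :: "nat \<Rightarrow> real mat"
  assumes layers: "\<And>k. 1 \<le> k \<Longrightarrow> k \<le> L \<Longrightarrow> Wl k \<in> carrier_mat (dm k) (dm (k - 1))"
begin

lemma lprod_above_carrier: "l \<le> L \<Longrightarrow> lprod dm Wl (l + 1) L \<in> carrier_mat dy (dm l)"
  using lprod_carrier[of "l + 1" L Wl dm] layers by simp

lemma lprod_below_carrier: "1 \<le> l \<Longrightarrow> l \<le> L \<Longrightarrow> lprod dm Wl 1 (l - 1) \<in> carrier_mat (dm (l - 1)) d"
  using lprod_carrier[of 1 "l - 1" Wl dm] layers by simp

lemma lprod_all_carrier: "lprod dm Wl 1 L \<in> carrier_mat dy d"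
  using lprod_carrier[of 1 L Wl dm] layers depth_pos by simp

lemma grad_carrier:
  assumes "1 \<le> l" "l \<le> L"
  shows "grad d m dy L X Y Wl l \<in> carrier_mat (dm l) (dm (l - 1))"
  unfolding grad_def outp_def
  using lprod_above_carrier[OF assms(2)] lprod_below_carrier[OF assms] lprod_all_carrier X_carrier Y_carrier
  by (auto intro!: mult_carrier_mat)

end

lemma polyak_step:
  "1 \<le> l \<Longrightarrow> l \<le> L \<Longrightarrow> W (Suc t) l = W t l - \<eta> \<cdot>\<^sub>m G t l + \<beta> \<cdot>\<^sub>m (W t l - W (t - 1) l)"
  using polyak unfolding polyak_seq_def by blast

lemma weights_carrier: "1 \<le> l \<Longrightarrow> l \<le> L \<Longrightarrow> W t l \<in> carrier_mat (dm l) (dm (l - 1))"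
proof (induction t arbitrary: l rule: less_induct)
  case (less t)
  show ?case
  proof (cases t)
    case 0
    then show ?thesis using initial_carrier less.prems by simp
  next
    case (Suc s)
    have "G s l \<in> carrier_mat (dm l) (dm (l - 1))"
      by (rule grad_carrier) (use less Suc in auto)
    moreover have "W s l \<in> carrier_mat (dm l) (dm (l - 1))" "W (s - 1) l \<in> carrier_mat (dm l) (dm (l - 1))"
      using less Suc by auto
    ultimately show ?thesis using polyak_step[OF less.prems, of s] Suc by (simp add: minus_carrier_mat)
  qed
qed

lemmas weights_dim [simp] = carrier_matD[OF weights_carrier, simplified]

lemma above_carrier: "l \<le> L \<Longrightarrow> above t l \<in> carrier_mat dy (dm l)"
  by (rule lprod_above_carrier) (use weights_carrier in auto)

lemma below_carrier: "1 \<le> l \<Longrightarrow> l \<le> L \<Longrightarrow> below t l \<in> carrier_mat (dm (l - 1)) d"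
  by (rule lprod_below_carrier) (use weights_carrier in auto)

lemmas above_dim [simp] = carrier_matD[OF above_carrier, simplified]
lemmas below_dim [simp] = carrier_matD[OF below_carrier, simplified]

lemma net_carrier: "net t \<in> carrier_mat dy n"
  using lprod_all_carrier[of "W t"] weights_carrier X_carrier by auto

lemma residual_carrier: "residual t \<in> carrier_mat dy n"
  unfolding outp_def using net_carrier Y_carrier by (simp add: minus_carrier_mat)

lemma G_carrier: "1 \<le> l \<Longrightarrow> l \<le> L \<Longrightarrow> G t l \<in> carrier_mat (dm l) (dm (l - 1))"
  by (rule grad_carrier) (use weights_carrier in auto)

lemma M_carrier: "1 \<le> l \<Longrightarrow> l \<le> L \<Longrightarrow> M t l \<in> carrier_mat (dm l) (dm (l - 1))"
  unfolding mom_def by (rule msum_carrier) (use G_carrier in auto)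

lemmas G_dim [simp] = carrier_matD[OF G_carrier, simplified]
lemmas M_dim [simp] = carrier_matD[OF M_carrier, simplified]

lemma index_M:
  assumes "1 \<le> l" "l \<le> L" "p < dm l" "q < dm (l - 1)"
  shows "M t l $$ (p, q) = (\<Sum>s<Suc t. \<beta> ^ (t - s) * G s l $$ (p, q))"
  unfolding mom_def using assms G_carrier[OF assms(1,2)]
  by (subst index_msum_upt) (auto simp: atLeast0LessThan)

lemma weights_Suc_entry:
  assumes "1 \<le> l" "l \<le> L" "p < dm l" "q < dm (l - 1)"
  shows "W (Suc t) l $$ (p, q) = W t l $$ (p, q) - \<eta> * G t l $$ (p, q) + \<beta> * (W t l $$ (p, q) - W (t - 1) l $$ (p, q))"
    and "W (Suc t) l $$ (p, q) = W t l $$ (p, q) - \<eta> * M t l $$ (p, q)"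
proof -
  have step: "W (Suc s) l $$ (p, q) = W s l $$ (p, q) - \<eta> * G s l $$ (p, q) + \<beta> * (W s l $$ (p, q) - W (s - 1) l $$ (p, q))" for s
    using polyak_step[OF assms(1,2), of s] assms by simp
  then show "W (Suc t) l $$ (p, q) = W t l $$ (p, q) - \<eta> * G t l $$ (p, q) + \<beta> * (W t l $$ (p, q) - W (t - 1) l $$ (p, q))" .
  show "W (Suc t) l $$ (p, q) = W t l $$ (p, q) - \<eta> * M t l $$ (p, q)"
    unfolding index_M[OF assms] by (rule heavy_ball_momentum_form[OF step])
qed

lemma weights_Suc: "1 \<le> l \<Longrightarrow> l \<le> L \<Longrightarrow> W (Suc t) l = W t l - \<eta> \<cdot>\<^sub>m M t l"
  by (rule eq_matI) (use weights_carrier M_carrier weights_Suc_entry(2) in auto)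

lemma eta_M_eq: "1 \<le> l \<Longrightarrow> l \<le> L \<Longrightarrow> \<eta> \<cdot>\<^sub>m M t l = \<eta> \<cdot>\<^sub>m G t l - \<beta> \<cdot>\<^sub>m W t l + \<beta> \<cdot>\<^sub>m W (t - 1) l"
  by (rule eq_matI) (use weights_carrier M_carrier G_carrier weights_Suc_entry in \<open>auto simp: algebra_simps\<close>)

subsection \<open>The matrix H\<close>

abbreviation inner_gram :: "nat \<Rightarrow> nat \<Rightarrow> real mat" where
  "inner_gram t l \<equiv> transpose_mat (below t l * X) * (below t l * X)"
abbreviation outer_gram :: "nat \<Rightarrow> nat \<Rightarrow> real mat" where
  "outer_gram t l \<equiv> above t l * transpose_mat (above t l)"

lemma Hmat_eq:
  "Hmat d m dy L X (W t) = (1 / (real m ^ (L - 1) * real dy)) \<cdot>\<^sub>m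
     msum (dy * n) (dy * n) (\<lambda>l. kron (inner_gram t l) (outer_gram t l)) [1..<Suc L]"
  unfolding Hmat_def using X_carrier by simp

lemma inner_gram_carrier: "1 \<le> l \<Longrightarrow> l \<le> L \<Longrightarrow> inner_gram t l \<in> carrier_mat n n"
  using mult_carrier_mat[OF below_carrier X_carrier] by (meson mult_carrier_mat transpose_carrier_mat)

lemma outer_gram_carrier: "l \<le> L \<Longrightarrow> outer_gram t l \<in> carrier_mat dy dy"
  using above_carrier by (meson mult_carrier_mat transpose_carrier_mat)

lemma kron_gram_carrier:
  "1 \<le> l \<Longrightarrow> l \<le> L \<Longrightarrow> kron (inner_gram t l) (outer_gram t l) \<in> carrier_mat (dy * n) (dy * n)"
  using carrier_matD[OF X_carrier] by (intro carrier_matI) (simp_all add: kron_def mult.commute)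

lemma kron_grams_carrier:
  "msum (dy * n) (dy * n) (\<lambda>l. kron (inner_gram t l) (outer_gram t l)) [1..<Suc L] \<in> carrier_mat (dy * n) (dy * n)"
  by (rule msum_carrier) (use kron_gram_carrier in auto)

lemma Hmat_carrier: "Hmat d m dy L X (W t) \<in> carrier_mat (dy * n) (dy * n)"
  unfolding Hmat_eq using kron_grams_carrier by simp

lemmas Hmat_dim [simp] = carrier_matD[OF Hmat_carrier]

lemma Hmat_psd: "psd (Hmat d m dy L X (W t))"
proof -
  let ?S = "msum (dy * n) (dy * n) (\<lambda>l. kron (inner_gram t l) (outer_gram t l)) [1..<Suc L]"
  let ?c = "1 / (real m ^ (L - 1) * real dy)"
  have "transpose_mat ?S = msum (dy * n) (dy * n) (\<lambda>l. transpose_mat (kron (inner_gram t l) (outer_gram t l))) [1..<Suc L]"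
    by (rule transpose_msum) (use kron_gram_carrier in auto)
  also have "\<dots> = ?S"
    by (intro msum_cong) (simp add: transpose_kron transpose_gram)
  finally have symmetric: "transpose_mat ?S = ?S" .
  have S_nonneg: "v \<bullet> (?S *\<^sub>v v) \<ge> 0" if v: "v \<in> carrier_vec (dy * n)" for v
  proof (rule msum_quadratic_form_nonneg[OF _ _ v])
    fix l assume "l \<in> set [1..<Suc L]"
    then have l: "1 \<le> l" "l \<le> L" by auto
    show "kron (inner_gram t l) (outer_gram t l) \<in> carrier_mat (dy * n) (dy * n)"
      by (rule kron_gram_carrier[OF l])
    have v': "v \<in> carrier_vec (n * dy)" using v by (simp add: mult.commute)
    show "v \<bullet> (kron (inner_gram t l) (outer_gram t l) *\<^sub>v v) \<ge> 0"
      by (rule kron_gram_quadratic_form_nonneg[OF mult_carrier_mat[OF below_carrier[OF l] X_carrier] above_carrier[OF l(2)] v'])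
  qed
  have "v \<bullet> (Hmat d m dy L X (W t) *\<^sub>v v) \<ge> 0" if v: "v \<in> carrier_vec (dy * n)" for v
  proof -
    have "Hmat d m dy L X (W t) *\<^sub>v v = ?c \<cdot>\<^sub>v (?S *\<^sub>v v)"
      unfolding Hmat_eq by (rule smult_mat_mult_vec[OF kron_grams_carrier v])
    then have "v \<bullet> (Hmat d m dy L X (W t) *\<^sub>v v) = ?c * (v \<bullet> (?S *\<^sub>v v))"
      using carrier_matD[OF kron_grams_carrier] v by (simp del: upt_Suc)
    then show ?thesis using S_nonneg[OF v] by (simp del: upt_Suc)
  qed
  moreover have "transpose_mat (Hmat d m dy L X (W t)) = Hmat d m dy L X (W t)"
    unfolding Hmat_eq transpose_smult_mat symmetric ..
  ultimately show ?thesis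
    using carrier_matD[OF Hmat_carrier] unfolding psd_def by (simp del: upt_Suc)
qed

subsection \<open>The residual dynamics\<close>

lemma xi_carrier: "xi d m dy L X Y W t \<in> carrier_vec (dy * n)"
  unfolding xi_def by (rule vecc_carrier[OF residual_carrier])

lemma dim_xi [simp]: "dim_vec (xi d m dy L X Y W t) = dy * n"
  using xi_carrier by simp

lemma xi_eq: "xi d m dy L X Y W t = vecc ((1 / nrm m dy L) \<cdot>\<^sub>m net t - Y)"
  unfolding xi_def outp_def ..

lemma gram_sandwich_carrier: "1 \<le> l \<Longrightarrow> l \<le> L \<Longrightarrow> outer_gram t l * residual t * inner_gram t l \<in> carrier_mat dy n"
  using outer_gram_carrier inner_gram_carrier residual_carrier by (meson mult_carrier_mat)

lemma grad_sandwich: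
  assumes l: "1 \<le> l" "l \<le> L"
  shows "above t l * G t l * (below t l * X) = (1 / nrm m dy L) \<cdot>\<^sub>m (outer_gram t l * residual t * inner_gram t l)"
proof -
  let ?A = "above t l" and ?B = "below t l * X" and ?E = "residual t"
  have A: "?A \<in> carrier_mat dy (dm l)" by (rule above_carrier[OF l(2)])
  have B: "?B \<in> carrier_mat (dm (l - 1)) n" by (rule mult_carrier_mat[OF below_carrier[OF l] X_carrier])
  have E: "?E \<in> carrier_mat dy n" by (rule residual_carrier)
  have AtE: "transpose_mat ?A * ?E \<in> carrier_mat (dm l) n" using A E by simp
  have "G t l = (1 / nrm m dy L) \<cdot>\<^sub>m (transpose_mat ?A * ?E * transpose_mat ?B)"
    by (simp only: grad_def)
  then have "?A * G t l * ?B = (1 / nrm m dy L) \<cdot>\<^sub>m (?A * (transpose_mat ?A * ?E * transpose_mat ?B) * ?B)"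
    using sandwich_smult_mat[OF A _ B] AtE B by simp
  also have "?A * (transpose_mat ?A * ?E * transpose_mat ?B) * ?B = ?A * (transpose_mat ?A * ?E) * (transpose_mat ?B * ?B)"
    using assoc_mult_mat[OF A AtE transpose_carrier_mat[THEN iffD2, OF B]]
      assoc_mult_mat[OF mult_carrier_mat[OF A AtE] transpose_carrier_mat[THEN iffD2, OF B] B] by simp
  also have "?A * (transpose_mat ?A * ?E) = outer_gram t l * ?E"
    using assoc_mult_mat[OF A transpose_carrier_mat[THEN iffD2, OF A] E] by simp
  finally show ?thesis .
qed

abbreviation grad_sum :: "nat \<Rightarrow> real mat" where
  "grad_sum t \<equiv> msum dy n (\<lambda>l. above t l * G t l * (below t l * X)) [1..<Suc L]"
abbreviation mom_sum :: "nat \<Rightarrow> real mat" where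
  "mom_sum t \<equiv> msum dy n (\<lambda>l. above t l * M t l * below t l * X) [1..<Suc L]"
abbreviation lag_sum :: "nat \<Rightarrow> real mat" where
  "lag_sum t \<equiv> msum dy n (\<lambda>l. above t l * W (t - 1) l * below t l * X) [1..<Suc L]"

lemma Hmat_mult_xi:
  "Hmat d m dy L X (W t) *\<^sub>v xi d m dy L X Y W t = vecc ((1 / nrm m dy L) \<cdot>\<^sub>m grad_sum t)"
proof -
  let ?S = "msum (dy * n) (dy * n) (\<lambda>l. kron (inner_gram t l) (outer_gram t l)) [1..<Suc L]"
  let ?R = "msum dy n (\<lambda>l. outer_gram t l * residual t * inner_gram t l) [1..<Suc L]"
  let ?x = "1 / nrm m dy L"
  have "?S *\<^sub>v vecc (residual t) = vecc ?R"
    using msum_kron_mult_vecc[of "[1..<Suc L]" "inner_gram t" n "outer_gram t" dy, OF _ _ residual_carrier]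
      inner_gram_carrier outer_gram_carrier
    by (simp only: transpose_gram set_upt atLeastLessThan_iff less_Suc_eq_le)
  then have "Hmat d m dy L X (W t) *\<^sub>v xi d m dy L X Y W t = vecc ((?x * ?x) \<cdot>\<^sub>m ?R)"
    unfolding Hmat_eq xi_def smult_mat_mult_vec[OF kron_grams_carrier vecc_carrier[OF residual_carrier]]
    by (simp add: vecc_smult nrm_sq del: upt_Suc)
  also have "(?x * ?x) \<cdot>\<^sub>m ?R = ?x \<cdot>\<^sub>m msum dy n (\<lambda>l. ?x \<cdot>\<^sub>m (outer_gram t l * residual t * inner_gram t l)) [1..<Suc L]"
    unfolding smult_smult_mat[symmetric]
    by (subst smult_msum) (use gram_sandwich_carrier in auto)
  also have "\<dots> = ?x \<cdot>\<^sub>m msum dy n (\<lambda>l. above t l * G t l * (below t l * X)) [1..<Suc L]"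
    by (intro arg_cong[where f = "\<lambda>A. ?x \<cdot>\<^sub>m A"] msum_cong grad_sandwich[symmetric]) auto
  finally show ?thesis .
qed

lemma layer_terms_carrier:
  assumes "1 \<le> l" "l \<le> L"
  shows "above t l * G t l * (below t l * X) \<in> carrier_mat dy n"
    and "above t l * M t l * below t l * X \<in> carrier_mat dy n"
    and "above t l * W (t - 1) l * below t l * X \<in> carrier_mat dy n"
  using above_carrier[OF assms(2)] G_carrier[OF assms] M_carrier[OF assms] weights_carrier[OF assms]
    below_carrier[OF assms] X_carrier
  by (meson mult_carrier_mat)+

lemma layer_momentum_term:
  assumes l: "1 \<le> l" "l \<le> L"
  shows "\<eta> \<cdot>\<^sub>m (above t l * M t l * below t l * X) =
    \<eta> \<cdot>\<^sub>m (above t l * G t l * (below t l * X)) - \<beta> \<cdot>\<^sub>m net t + \<beta> \<cdot>\<^sub>m (above t l * W (t - 1) l * below t l * X)"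
proof -
  let ?A = "above t l" and ?B = "below t l * X"
  have A: "?A \<in> carrier_mat dy (dm l)" by (rule above_carrier[OF l(2)])
  have B: "?B \<in> carrier_mat (dm (l - 1)) n" by (rule mult_carrier_mat[OF below_carrier[OF l] X_carrier])
  have reassoc: "?A * N * below t l * X = ?A * N * ?B" if "N \<in> carrier_mat (dm l) (dm (l - 1))" for N
    using assoc_mult_mat[OF mult_carrier_mat[OF A that] below_carrier[OF l] X_carrier] .
  note shapes = M_carrier[OF l] G_carrier[OF l] weights_carrier[OF l]
  have "?A * W t l * below t l = lprod dm (W t) 1 L"
    by (rule lprod_split_at) (use weights_carrier l in auto)
  then have net: "?A * W t l * ?B = net t"
    unfolding reassoc[OF shapes(3), symmetric] by simp
  have "\<eta> \<cdot>\<^sub>m (?A * M t l * ?B) = ?A * (\<eta> \<cdot>\<^sub>m G t l - \<beta> \<cdot>\<^sub>m W t l + \<beta> \<cdot>\<^sub>m W (t - 1) l) * ?B"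
    using sandwich_smult_mat[OF A shapes(1) B, of \<eta>] by (simp only: eta_M_eq[OF l])
  also have "\<dots> = \<eta> \<cdot>\<^sub>m (?A * G t l * ?B) - \<beta> \<cdot>\<^sub>m (?A * W t l * ?B) + \<beta> \<cdot>\<^sub>m (?A * W (t - 1) l * ?B)"
    by (rule sandwich_lincomb_mat[OF A shapes(2,3,3) B])
  finally show ?thesis using reassoc shapes net by simp
qed

lemma Phi_mult_X:
  "Phi d m dy L X Y \<eta> \<beta> W t * X = net (Suc t) - net t + \<eta> \<cdot>\<^sub>m mom_sum t"
proof -
  let ?MS = "msum dy d (\<lambda>l. above t l * M t l * below t l) [1..<Suc L]"
  have terms: "above t l * M t l * below t l \<in> carrier_mat dy d" if "l \<in> set [1..<Suc L]" for l
  proof -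
    from that have "1 \<le> l" "l \<le> L" by auto
    then show ?thesis using above_carrier M_carrier below_carrier by (meson mult_carrier_mat)
  qed
  have MS: "?MS \<in> carrier_mat dy d" by (rule msum_carrier[OF terms])
  have next_weights: "lprod dm (\<lambda>l. W t l - \<eta> \<cdot>\<^sub>m M t l) 1 L = lprod dm (W (Suc t)) 1 L"
    by (rule lprod_cong) (simp add: weights_Suc)
  have "Phi d m dy L X Y \<eta> \<beta> W t * X = (lprod dm (W (Suc t)) 1 L - lprod dm (W t) 1 L + \<eta> \<cdot>\<^sub>m ?MS) * X"
    unfolding Phi_def next_weights ..
  also have "\<dots> = net (Suc t) - net t + \<eta> \<cdot>\<^sub>m (?MS * X)"
    using lprod_all_carrier[of "W (Suc t)"] lprod_all_carrier[of "W t"] weights_carrier MS X_carrier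
    by (simp add: add_mult_distrib_mat[of _ dy d] minus_mult_distrib_mat[of _ dy d] mult_smult_assoc_mat[of _ dy d]
        minus_carrier_mat)
  also have "?MS * X = mom_sum t"
    by (rule msum_mult[OF terms X_carrier])
  finally show ?thesis .
qed

lemma psi_eq:
  "psi d m dy L X \<beta> W t = vecc ((1 / nrm m dy L) \<cdot>\<^sub>m
     ((real (L - 1) * \<beta>) \<cdot>\<^sub>m net t + \<beta> \<cdot>\<^sub>m net (t - 1) - \<beta> \<cdot>\<^sub>m lag_sum t))"
  unfolding psi_def carrier_matD(2)[OF X_carrier] ..

lemma eta_mom_sum_entry:
  assumes pq: "p < dy" "q < n"
  shows "\<eta> * mom_sum t $$ (p, q) = \<eta> * grad_sum t $$ (p, q) - \<beta> * real L * net t $$ (p, q) + \<beta> * lag_sum t $$ (p, q)"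
proof -
  let ?g = "\<lambda>l. (above t l * G t l * (below t l * X)) $$ (p, q)"
  let ?m = "\<lambda>l. (above t l * M t l * below t l * X) $$ (p, q)"
  let ?r = "\<lambda>l. (above t l * W (t - 1) l * below t l * X) $$ (p, q)"
  have sums: "grad_sum t $$ (p, q) = (\<Sum>l = 1..<Suc L. ?g l)" "mom_sum t $$ (p, q) = (\<Sum>l = 1..<Suc L. ?m l)"
    "lag_sum t $$ (p, q) = (\<Sum>l = 1..<Suc L. ?r l)"
    using pq by (intro index_msum_upt layer_terms_carrier; simp)+
  have "\<eta> * ?m l = \<eta> * ?g l - \<beta> * net t $$ (p, q) + \<beta> * ?r l" if "l \<in> {1..<Suc L}" for l
  proof -
    from that have l: "1 \<le> l" "l \<le> L" by auto
    show ?thesis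
      using arg_cong[OF layer_momentum_term[OF l, of t], of "\<lambda>A. A $$ (p, q)"] pq
        carrier_matD[OF layer_terms_carrier(1)[OF l]] carrier_matD[OF layer_terms_carrier(2)[OF l]]
        carrier_matD[OF layer_terms_carrier(3)[OF l]] carrier_matD[OF net_carrier]
      by simp
  qed
  then have "\<eta> * (\<Sum>l = 1..<Suc L. ?m l) = (\<Sum>l = 1..<Suc L. \<eta> * ?g l - \<beta> * net t $$ (p, q) + \<beta> * ?r l)"
    unfolding sum_distrib_left by (rule sum.cong[OF refl])
  then show ?thesis
    unfolding sums by (simp add: sum.distrib sum_subtractf sum_distrib_left del: sum.op_ivl_Suc)
qed

lemma layer_sums_carrier:
  "grad_sum t \<in> carrier_mat dy n" "mom_sum t \<in> carrier_mat dy n" "lag_sum t \<in> carrier_mat dy n"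
  by (intro msum_carrier layer_terms_carrier; auto)+

lemma phi_psi_dim [simp]:
  "dim_vec (phi d m dy L X Y \<eta> \<beta> W t) = dy * n" "dim_vec (psi d m dy L X \<beta> W t) = dy * n"
  unfolding phi_def Phi_mult_X psi_eq
  using carrier_matD[OF net_carrier] layer_sums_carrier[THEN carrier_matD(1)] layer_sums_carrier[THEN carrier_matD(2)]
  by (simp_all del: upt_Suc)

lemma residual_terms_index:
  assumes i: "i < dy * n"
  defines "p \<equiv> i mod dy" and "q \<equiv> i div dy"
  shows "xi d m dy L X Y W s $ i = 1 / nrm m dy L * net s $$ (p, q) - Y $$ (p, q)"
    and "(Hmat d m dy L X (W t) *\<^sub>v xi d m dy L X Y W t) $ i = 1 / nrm m dy L * grad_sum t $$ (p, q)"
    and "phi d m dy L X Y \<eta> \<beta> W t $ i =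
      1 / nrm m dy L * (net (Suc t) $$ (p, q) - net t $$ (p, q) + \<eta> * mom_sum t $$ (p, q))"
    and "psi d m dy L X \<beta> W t $ i = 1 / nrm m dy L *
      (real (L - 1) * \<beta> * net t $$ (p, q) + \<beta> * net (t - 1) $$ (p, q) - \<beta> * lag_sum t $$ (p, q))"
    and "iota d m dy L X Y \<eta> W t $ i =
      \<eta> * ((Hmat d m dy L X (W 0) *\<^sub>v xi d m dy L X Y W t) $ i - (Hmat d m dy L X (W t) *\<^sub>v xi d m dy L X Y W t) $ i)"
proof -
  let ?x = "1 / nrm m dy L"
  have pq: "p < dy" "q < n" unfolding p_def q_def using divmod_less_bounds[OF i] .
  have entry: "vecc A $ i = A $$ (p, q)" if "A \<in> carrier_mat dy n" for A
    unfolding p_def q_def by (rule index_vecc[OF that i])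
  note shapes = net_carrier layer_sums_carrier Y_carrier carrier_matD[OF net_carrier] carrier_matD[OF Y_carrier]
    layer_sums_carrier[THEN carrier_matD(1)] layer_sums_carrier[THEN carrier_matD(2)]
  show "xi d m dy L X Y W s $ i = ?x * net s $$ (p, q) - Y $$ (p, q)"
    unfolding xi_eq using entry[of "?x \<cdot>\<^sub>m net s - Y"] pq shapes by (simp add: minus_carrier_mat)
  show "(Hmat d m dy L X (W t) *\<^sub>v xi d m dy L X Y W t) $ i = ?x * grad_sum t $$ (p, q)"
    unfolding Hmat_mult_xi using entry[of "?x \<cdot>\<^sub>m grad_sum t"] pq shapes by simp
  show "phi d m dy L X Y \<eta> \<beta> W t $ i = ?x * (net (Suc t) $$ (p, q) - net t $$ (p, q) + \<eta> * mom_sum t $$ (p, q))"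
    unfolding phi_def Phi_mult_X using entry[of "?x \<cdot>\<^sub>m (net (Suc t) - net t + \<eta> \<cdot>\<^sub>m mom_sum t)"] pq shapes
    by (simp add: minus_carrier_mat)
  show "psi d m dy L X \<beta> W t $ i =
      ?x * (real (L - 1) * \<beta> * net t $$ (p, q) + \<beta> * net (t - 1) $$ (p, q) - \<beta> * lag_sum t $$ (p, q))"
    unfolding psi_eq using entry[of "?x \<cdot>\<^sub>m ((real (L - 1) * \<beta>) \<cdot>\<^sub>m net t + \<beta> \<cdot>\<^sub>m net (t - 1) - \<beta> \<cdot>\<^sub>m lag_sum t)"]
      pq shapes by (simp add: minus_carrier_mat)
  show "iota d m dy L X Y \<eta> W t $ i =
      \<eta> * ((Hmat d m dy L X (W 0) *\<^sub>v xi d m dy L X Y W t) $ i - (Hmat d m dy L X (W t) *\<^sub>v xi d m dy L X Y W t) $ i)"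
    unfolding iota_def using minus_mult_distrib_mat_vec[OF Hmat_carrier Hmat_carrier xi_carrier] i by simp
qed

lemma xi_Suc:
  "xi d m dy L X Y W (Suc t) =
     ((1 + \<beta>) \<cdot>\<^sub>m 1\<^sub>m (dy * n) - \<eta> \<cdot>\<^sub>m Hmat d m dy L X (W 0)) *\<^sub>v xi d m dy L X Y W t
     + (- (\<beta> \<cdot>\<^sub>m 1\<^sub>m (dy * n))) *\<^sub>v xi d m dy L X Y W (t - 1)
     + (phi d m dy L X Y \<eta> \<beta> W t + psi d m dy L X \<beta> W t + iota d m dy L X Y \<eta> W t)"
  (is "?\<xi> (Suc t) = ?rhs")
proof -
  have dims: "dim_vec ?rhs = dy * n" by (simp add: iota_def)
  have "?\<xi> (Suc t) $ i = ?rhs $ i" if i: "i < dy * n" for i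
  proof -
    note entries = residual_terms_index[OF i]
    have "?rhs $ i = ((1 + \<beta>) * ?\<xi> t $ i - \<eta> * (Hmat d m dy L X (W 0) *\<^sub>v ?\<xi> t) $ i) + (- \<beta>) * ?\<xi> (t - 1) $ i
        + (phi d m dy L X Y \<eta> \<beta> W t $ i + psi d m dy L X \<beta> W t $ i + iota d m dy L X Y \<eta> W t $ i)"
      using i by (simp add: smult_one_mat_mult_vec[OF Hmat_carrier xi_carrier] iota_def)
    also have "\<dots> = ?\<xi> (Suc t) $ i"
      unfolding entries eta_mom_sum_entry[OF divmod_less_bounds[OF i]] using depth_pos
      by (simp add: algebra_simps add_divide_distrib of_nat_diff del: upt_Suc)
    finally show ?thesis ..
  qed
  with dims show ?thesis by (intro eq_vecI) simp_all
qed

lemma xi_recursion: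
  "xi d m dy L X Y W (Suc t) @\<^sub>v xi d m dy L X Y W t =
     four_block_mat ((1 + \<beta>) \<cdot>\<^sub>m 1\<^sub>m (dy * n) - \<eta> \<cdot>\<^sub>m Hmat d m dy L X (W 0)) (- (\<beta> \<cdot>\<^sub>m 1\<^sub>m (dy * n)))
                    (1\<^sub>m (dy * n)) (0\<^sub>m (dy * n) (dy * n))
       *\<^sub>v (xi d m dy L X Y W t @\<^sub>v xi d m dy L X Y W (t - 1))
     + ((phi d m dy L X Y \<eta> \<beta> W t + psi d m dy L X \<beta> W t + iota d m dy L X Y \<eta> W t) @\<^sub>v 0\<^sub>v (dy * n))"
proof -
  have "(1 + \<beta>) \<cdot>\<^sub>m 1\<^sub>m (dy * n) - \<eta> \<cdot>\<^sub>m Hmat d m dy L X (W 0) \<in> carrier_mat (dy * n) (dy * n)"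
    using Hmat_carrier by (simp add: minus_carrier_mat)
  moreover have "phi d m dy L X Y \<eta> \<beta> W t + psi d m dy L X \<beta> W t + iota d m dy L X Y \<eta> W t \<in> carrier_vec (dy * n)"
    by (simp add: carrier_vecI iota_def)
  ultimately show ?thesis
    using four_block_companion_mult_vec[OF _ _ xi_carrier xi_carrier] xi_Suc by simp
qed

end

theorem lemma4:
  fixes d m dy L n :: nat and X Y :: "real mat" and \<eta> \<beta> :: real
    and W :: "nat \<Rightarrow> nat \<Rightarrow> real mat"
  assumes "L \<ge> 1" and "d > 0" and "m > 0" and "dy > 0" and "n > 0"
    and "X \<in> carrier_mat d n" and "Y \<in> carrier_mat dy n"
    and "\<forall>l. 1 \<le> l \<and> l \<le> L \<longrightarrow> W 0 l \<in> carrier_mat (ldim d m dy L l) (ldim d m dy L (l - 1))"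
    and "polyak_seq d m dy L X Y \<eta> \<beta> W"
  shows "(\<forall>t. psd (Hmat d m dy L X (W t))) \<and>
         (\<forall>t. xi d m dy L X Y W (Suc t) @\<^sub>v xi d m dy L X Y W t =
           four_block_mat ((1 + \<beta>) \<cdot>\<^sub>m 1\<^sub>m (dy * n) - \<eta> \<cdot>\<^sub>m Hmat d m dy L X (W 0)) (- (\<beta> \<cdot>\<^sub>m 1\<^sub>m (dy * n)))
                          (1\<^sub>m (dy * n)) (0\<^sub>m (dy * n) (dy * n))
             *\<^sub>v (xi d m dy L X Y W t @\<^sub>v xi d m dy L X Y W (t - 1))
           + ((phi d m dy L X Y \<eta> \<beta> W t + psi d m dy L X \<beta> W t + iota d m dy L X Y \<eta> W t) @\<^sub>v 0\<^sub>v (dy * n)))"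
proof -
  interpret polyak_network d m dy L n X Y \<eta> \<beta> W
    using assms by unfold_locales simp_all
  show ?thesis using Hmat_psd xi_recursion by blast
qed

end
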